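(* There is no binary self-orthogonal $[72,7,34]$ code.
   Context: A binary linear code $C$ is self-orthogonal if $C\subseteq C^\perp$. *)

theory Defs
  imports "HOL-Analysis.Analysis" "HOL-Library.Z2" "HOL-Library.Numeral_Type"
begin

definition bdot :: "bit ^ 'n \<Rightarrow> bit ^ 'n \<Rightarrow> bit" where
  "bdot x y = (\<Sum>i\<in>UNIV. x $ i * y $ i)"

definition binary_linear_code :: "(bit ^ 'n) set \<Rightarrow> bool" where
  "binary_linear_code C \<longleftrightarrow> vec.subspace C"

definition dual_code :: "(bit ^ 'n) set \<Rightarrow> (bit ^ 'n) set" where
  "dual_code C = {y. \<forall>x\<in>C. bdot x y = 0}"

definition self_orthogonal :: "(bit ^ 'n) set \<Rightarrow> bool" where
  "self_orthogonal C \<longleftrightarrow> C \<subseteq> dual_code C"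

definition hamming_dist :: "bit ^ 'n \<Rightarrow> bit ^ 'n \<Rightarrow> nat" where
  "hamming_dist x y = card {i. x $ i \<noteq> y $ i}"

definition min_dist :: "(bit ^ 'n) set \<Rightarrow> nat" where
  "min_dist C = Min {hamming_dist x y | x y. x \<in> C \<and> y \<in> C \<and> x \<noteq> y}"

definition is_nkd_code :: "(bit ^ 'n) set \<Rightarrow> nat \<Rightarrow> nat \<Rightarrow> nat \<Rightarrow> bool" where
  "is_nkd_code C n k d \<longleftrightarrow> binary_linear_code C \<and> CARD('n) = n \<and> vec.dim C = k
     \<and> min_dist C = d"

end

theory Submission
  imports Defs
begin

text \<open>The codewords of a self-orthogonal binary code have even weight and pairwise even
  overlap, so weight modulo 4 is additive on it and the doubly-even codewords form a subcode
  of codimension at most one. For a \<open>[72,7,34]\<close> code this subcode has dimension at least 6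
  and, its weights being multiples of 4, minimum weight at least 36. The Griesmer bound then
  demands length at least \<open>36 + 18 + 9 + 5 + 3 + 2 = 73 > 72\<close>.\<close>

definition weight_on :: "'n set \<Rightarrow> 'a::zero ^ 'n \<Rightarrow> nat" where
  "weight_on S x = card {i\<in>S. x $ i \<noteq> 0}"

abbreviation weight :: "'a::zero ^ 'n \<Rightarrow> nat" where
  "weight x \<equiv> weight_on UNIV x"

definition overlap :: "bit ^ 'n \<Rightarrow> bit ^ 'n \<Rightarrow> nat" where
  "overlap x y = card {i. x $ i = 1 \<and> y $ i = 1}"

lemma card_eq_zero_coords_plus_weight_on:
  fixes c :: "'a::zero ^ 'n"
  assumes "finite S"
  shows "card S = card {i\<in>S. c $ i = 0} + weight_on S c"
proof -
  have "S = {i\<in>S. c $ i = 0} \<union> {i\<in>S. c $ i \<noteq> 0}" by auto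
  then show ?thesis
    unfolding weight_on_def using assms by (metis (no_types, lifting) card_Un_disjoint
      disjoint_iff finite_Un mem_Collect_eq)
qed

lemma weight_eq_overlap_self: "weight x = overlap x x"
  by (simp add: weight_on_def overlap_def)

lemma weight_add:
  fixes x y :: "bit ^ 'n::finite"
  shows "weight (x + y) + 2 * overlap x y = weight x + weight y"
proof -
  let ?P = "{i. x $ i = 1 \<and> y $ i = 0}"
  let ?Q = "{i. x $ i = 0 \<and> y $ i = 1}"
  let ?R = "{i. x $ i = 1 \<and> y $ i = 1}"
  have "{i. x $ i \<noteq> 0} = ?P \<union> ?R" "{i. (x + y) $ i \<noteq> 0} = ?P \<union> ?Q"
    "{i. y $ i \<noteq> 0} = ?Q \<union> ?R" by auto
  moreover have "card (?P \<union> ?R) = card ?P + card ?R" "card (?P \<union> ?Q) = card ?P + card ?Q"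
    "card (?Q \<union> ?R) = card ?Q + card ?R" by (auto intro: card_Un_disjoint)
  ultimately show ?thesis by (simp add: weight_on_def overlap_def)
qed

text \<open>The vectors \<open>x\<close> and \<open>x + c\<close> together cover the support of \<open>c\<close> once and the
  support of \<open>x\<close> off \<open>c\<close> twice.\<close>

lemma weight_on_add_residual:
  fixes x c :: "bit ^ 'n::finite"
  shows "weight_on S x + weight_on S (x + c) = 2 * weight_on {i\<in>S. c $ i = 0} x + weight_on S c"
proof -
  let ?A = "{i\<in>S. c $ i = 0 \<and> x $ i = 1}"
  let ?B = "{i\<in>S. c $ i = 1 \<and> x $ i = 1}"
  let ?E = "{i\<in>S. c $ i = 1 \<and> x $ i = 0}"
  have "{i\<in>S. x $ i \<noteq> 0} = ?A \<union> ?B" "{i\<in>S. (x + c) $ i \<noteq> 0} = ?A \<union> ?E"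
    "{i\<in>{i\<in>S. c $ i = 0}. x $ i \<noteq> 0} = ?A" "{i\<in>S. c $ i \<noteq> 0} = ?B \<union> ?E" by auto
  moreover have "card (?A \<union> ?B) = card ?A + card ?B" "card (?A \<union> ?E) = card ?A + card ?E"
    "card (?B \<union> ?E) = card ?B + card ?E" by (auto intro: card_Un_disjoint)
  ultimately show ?thesis by (simp add: weight_on_def)
qed

lemma vec_bit_add_self [simp]: "x + x = (0 :: bit ^ 'n)"
  by (simp add: vec_eq_iff)

lemma vec_bit_add_eq_0_iff: "x + y = (0 :: bit ^ 'n) \<longleftrightarrow> x = y"
  by (metis add.assoc add.right_neutral vec_bit_add_self)

lemma hamming_dist_0_right: "hamming_dist x 0 = weight x"
  by (simp add: hamming_dist_def weight_on_def)

lemma min_dist_le_weight: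
  fixes C :: "(bit ^ 'n::finite) set"
  assumes "vec.subspace C" "x \<in> C" "x \<noteq> 0"
  shows "min_dist C \<le> weight x"
proof -
  let ?dists = "{hamming_dist x y | x y. x \<in> C \<and> y \<in> C \<and> x \<noteq> y}"
  have "?dists \<subseteq> {..CARD('n)}"
    by (auto simp: hamming_dist_def card_mono)
  then have "finite ?dists" by (rule finite_subset) simp
  moreover have "hamming_dist x 0 \<in> ?dists"
    using assms vec.subspace_0 by blast
  ultimately show ?thesis
    unfolding min_dist_def hamming_dist_0_right by (rule Min_le)
qed

lemma of_nat_bit_eq_0_iff: "(of_nat n :: bit) = 0 \<longleftrightarrow> even n"
  by (simp only: Z2.bit_eq_iff even_of_nat_iff even_zero simp_thms)

lemma bdot_eq_of_nat_overlap:
  fixes x y :: "bit ^ 'n::finite"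
  shows "bdot x y = of_nat (overlap x y)"
proof -
  have "x $ i * y $ i = of_bool (x $ i = 1 \<and> y $ i = 1)" for i
    by (cases "x $ i"; cases "y $ i") simp_all
  then show ?thesis by (simp add: bdot_def overlap_def)
qed

lemma self_orthogonal_even_overlap:
  fixes C :: "(bit ^ 'n::finite) set"
  assumes "self_orthogonal C" "x \<in> C" "y \<in> C"
  shows "even (overlap x y)"
  using assms by (auto simp: self_orthogonal_def dual_code_def bdot_eq_of_nat_overlap
    of_nat_bit_eq_0_iff)

lemma self_orthogonal_even_weight:
  fixes C :: "(bit ^ 'n::finite) set"
  assumes "self_orthogonal C" "x \<in> C"
  shows "even (weight x)"
  using self_orthogonal_even_overlap[OF assms assms(2)] by (simp add: weight_eq_overlap_self)

lemma self_orthogonal_weight_add_mod_4: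
  fixes C :: "(bit ^ 'n::finite) set"
  assumes "self_orthogonal C" "x \<in> C" "y \<in> C"
  shows "weight (x + y) mod 4 = (weight x mod 4 + weight y mod 4) mod 4"
proof -
  obtain k where "overlap x y = 2 * k"
    using self_orthogonal_even_overlap[OF assms] by blast
  then have "weight x + weight y = weight (x + y) + 4 * k"
    using weight_add[of x y] by simp
  then have "weight (x + y) mod 4 = (weight x + weight y) mod 4"
    by simp
  then show ?thesis
    by (simp add: mod_add_eq)
qed

definition doubly_even_subcode :: "(bit ^ 'n) set \<Rightarrow> (bit ^ 'n) set" where
  "doubly_even_subcode C = {x\<in>C. 4 dvd weight x}"

lemma subspace_doubly_even_subcode:
  fixes C :: "(bit ^ 'n::finite) set"
  assumes "vec.subspace C" "self_orthogonal C"
  shows "vec.subspace (doubly_even_subcode C)"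
proof (rule vec.subspaceI)
  show "0 \<in> doubly_even_subcode C"
    using assms(1) vec.subspace_0 by (auto simp: doubly_even_subcode_def weight_on_def)
  then show "c *s x \<in> doubly_even_subcode C" if "x \<in> doubly_even_subcode C" for c :: bit and x
    using that by (cases c) auto
  show "x + y \<in> doubly_even_subcode C"
    if "x \<in> doubly_even_subcode C" "y \<in> doubly_even_subcode C" for x y
  proof -
    have x: "x \<in> C" "4 dvd weight x" and y: "y \<in> C" "4 dvd weight y"
      using that by (simp_all add: doubly_even_subcode_def)
    have "weight (x + y) mod 4 = (weight x mod 4 + weight y mod 4) mod 4"
      by (rule self_orthogonal_weight_add_mod_4[OF assms(2) x(1) y(1)])
    also have "\<dots> = 0"
      using x(2) y(2) by simp
    finally show ?thesis
      using vec.subspace_add[OF assms(1) x(1) y(1)]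
      by (simp add: doubly_even_subcode_def dvd_eq_mod_eq_0)
  qed
qed

lemma add_mem_doubly_even_subcode:
  fixes C :: "(bit ^ 'n::finite) set"
  assumes "vec.subspace C" "self_orthogonal C" "x \<in> C" "y \<in> C"
    and "x \<notin> doubly_even_subcode C" "y \<notin> doubly_even_subcode C"
  shows "x + y \<in> doubly_even_subcode C"
proof -
  have "n mod 4 = 2" if "even n" "\<not> 4 dvd n" for n :: nat
    using that by presburger
  then have "weight x mod 4 = 2" "weight y mod 4 = 2"
    using assms(2-) self_orthogonal_even_weight[OF assms(2)]
    by (auto simp: doubly_even_subcode_def)
  then show ?thesis
    using self_orthogonal_weight_add_mod_4[OF assms(2-4)] vec.subspace_add[OF assms(1,3,4)]
    by (simp add: doubly_even_subcode_def dvd_eq_mod_eq_0)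
qed

lemma dim_le_dim_doubly_even_subcode_plus_1:
  fixes C :: "(bit ^ 'n::finite) set"
  assumes "vec.subspace C" "self_orthogonal C"
  shows "vec.dim C \<le> vec.dim (doubly_even_subcode C) + 1"
proof (cases "C \<subseteq> doubly_even_subcode C")
  case True
  then show ?thesis
    using vec.dim_subset[OF True] by linarith
next
  case False
  then obtain c where c: "c \<in> C" "c \<notin> doubly_even_subcode C"
    by blast
  have C_span: "C \<subseteq> vec.span (insert c (doubly_even_subcode C))"
  proof
    fix x
    assume x: "x \<in> C"
    show "x \<in> vec.span (insert c (doubly_even_subcode C))"
    proof (cases "x \<in> doubly_even_subcode C")
      case True
      then show ?thesis
        by (simp add: vec.span_base)
    next
      case False
      then have "x + c \<in> doubly_even_subcode C"
        using add_mem_doubly_even_subcode[OF assms x c(1) _ c(2)] by blast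
      then have "(x + c) + c \<in> vec.span (insert c (doubly_even_subcode C))"
        by (intro vec.span_add vec.span_base) auto
      then show ?thesis
        by (simp add: add.assoc)
    qed
  qed
  from vec.dim_subset[OF C_span]
  have "vec.dim C \<le> vec.dim (insert c (doubly_even_subcode C))"
    by simp
  also have "\<dots> \<le> vec.dim (doubly_even_subcode C) + 1"
    by (simp add: vec.dim_insert)
  finally show ?thesis .
qed

lemma (in vector_space) obtain_hyperplane_avoiding:
  assumes "subspace D" "c \<in> D" "c \<noteq> 0"
  obtains D' where "subspace D'" "D' \<subseteq> D" "c \<notin> D'" "dim D' = dim D - 1"
proof -
  have "independent {c}"
    using assms(3) independent_empty by (simp add: independent_insert)
  then obtain B where B: "{c} \<subseteq> B" "B \<subseteq> D" "independent B" "D \<subseteq> span B"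
    using maximal_independent_subset_extend[of "{c}" D] assms(2) by blast
  have "c \<in> B" using B(1) by blast
  have "dim (span (B - {c})) = card (B - {c})"
    by (rule dim_span_eq_card_independent, rule independent_mono[OF B(3)]) blast
  also have "\<dots> = dim D - 1"
    using card_Diff_singleton[OF \<open>c \<in> B\<close>] basis_card_eq_dim[OF B(2,4,3)] by simp
  finally have "dim (span (B - {c})) = dim D - 1" .
  moreover have "c \<notin> span (B - {c})"
    using B(3) \<open>c \<in> B\<close> by (metis independent_insert insert_Diff Diff_iff singletonI)
  moreover have "span (B - {c}) \<subseteq> D"
    using B(2) assms(1) by (intro span_minimal) auto
  ultimately show ?thesis
    using that subspace_span by blast
qed

text \<open>\<open>griesmer_sum k d = (\<Sum>i<k. \<lceil>d / 2^i\<rceil>)\<close>, since nested ceilings of halvings collapse.\<close>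

fun griesmer_sum :: "nat \<Rightarrow> nat \<Rightarrow> nat" where
  "griesmer_sum 0 d = 0"
| "griesmer_sum (Suc k) d = d + griesmer_sum k ((d + 1) div 2)"

lemma griesmer_bound:
  fixes D :: "(bit ^ 'n::finite) set"
  assumes "vec.subspace D" "k \<le> vec.dim D" "\<And>x. x \<in> D \<Longrightarrow> x \<noteq> 0 \<Longrightarrow> d \<le> weight_on S x"
  shows "griesmer_sum k d \<le> card S"
  using assms
proof (induction k arbitrary: D S d)
  case 0
  then show ?case by simp
next
  case (Suc k)
  then have "vec.dim D \<noteq> 0"
    by linarith
  then obtain y where "y \<in> D" "y \<noteq> 0"
    by auto
  then obtain c where c: "c \<in> D" "c \<noteq> 0"
    and c_min: "\<And>x. x \<in> D \<Longrightarrow> x \<noteq> 0 \<Longrightarrow> weight_on S c \<le> weight_on S x"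
    using ex_has_least_nat[of "\<lambda>x. x \<in> D \<and> x \<noteq> 0" y "weight_on S"] by blast
  obtain D' where D': "vec.subspace D'" "D' \<subseteq> D" "c \<notin> D'" "vec.dim D' = vec.dim D - 1"
    using vec.obtain_hyperplane_avoiding[OF Suc.prems(1) c] .
  have "griesmer_sum k ((d + 1) div 2) \<le> card {i\<in>S. c $ i = 0}"
  proof (rule Suc.IH)
    show "vec.subspace D'" "k \<le> vec.dim D'"
      using D' Suc.prems(2) by auto
    fix x
    assume x: "x \<in> D'" "x \<noteq> 0"
    then have "x + c \<in> D" "x + c \<noteq> 0"
      using D' c vec.subspace_add[OF Suc.prems(1)]
      by (auto simp: vec_bit_add_eq_0_iff)
    then have "weight_on S c \<le> weight_on S (x + c)"
      by (rule c_min)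
    moreover have "weight_on S c \<le> weight_on S x"
      using c_min x D'(2) by blast
    ultimately have "weight_on S c \<le> 2 * weight_on {i\<in>S. c $ i = 0} x"
      using weight_on_add_residual[of S x c] by linarith
    then show "(d + 1) div 2 \<le> weight_on {i\<in>S. c $ i = 0} x"
      using Suc.prems(3)[OF c] by linarith
  qed
  then show ?case
    using card_eq_zero_coords_plus_weight_on[of S c] Suc.prems(3)[OF c] by simp
qed

lemma griesmer_sum_numeral [simp]:
  "griesmer_sum (numeral n) d = d + griesmer_sum (pred_numeral n) ((d + 1) div 2)"
  by (simp add: numeral_eq_Suc)

theorem proposition6p10:
  "\<not> (\<exists>C :: (bit ^ 72) set. is_nkd_code C 72 7 34 \<and> self_orthogonal C)"
proof
  assume "\<exists>C :: (bit ^ 72) set. is_nkd_code C 72 7 34 \<and> self_orthogonal C"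
  then obtain C :: "(bit ^ 72) set" where C: "vec.subspace C" "self_orthogonal C"
    and dim_C: "vec.dim C = 7" and min_dist_C: "min_dist C = 34"
    unfolding is_nkd_code_def binary_linear_code_def by blast
  let ?D = "doubly_even_subcode C"
  have "36 \<le> weight x" if "x \<in> ?D" "x \<noteq> 0" for x
  proof -
    have "34 \<le> weight x" "4 dvd weight x"
      using that min_dist_le_weight[OF C(1)] min_dist_C by (auto simp: doubly_even_subcode_def)
    then show ?thesis by presburger
  qed
  moreover have "6 \<le> vec.dim ?D"
    using dim_le_dim_doubly_even_subcode_plus_1[OF C] dim_C by simp
  ultimately have "griesmer_sum 6 36 \<le> CARD(72)"
    using griesmer_bound[OF subspace_doubly_even_subcode[OF C]] by blast
  then show False
    by simp
qed

end
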